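(* Let $\sigma:S\to\{\bullet\}$ be the map from the Sierpinski space $S=\{o,c\}$ (open sets $\emptyset,\{o\},\{o,c\}$) to the one-point space. Then $\{\sigma\}^r$ (in $\mathrm{Top}$) is the class of continuous maps $p:X\to Y$ such that every fibre $p^{-1}(y)$, $y\in Y$, with the subspace topology, satisfies the separation axiom $T_1$.
   Context: For continuous maps $f:A\to B$, $g:C\to D$, $f\pitchfork g$ means: for all continuous $t:A\to C$, $b:B\to D$ with $g\circ t=b\circ f$ there is continuous $d:B\to C$ with $d\circ f=t$, $g\circ d=b$. For a class $P$, $P^r=\{g: f\pitchfork g\ \forall f\in P\}$. *)

theory Defs
  imports "HOL-Analysis.Analysis"
begin

text \<open>Lifting property: f has the left lifting property w.r.t. g.
  All equalities of maps are required on the underlying point sets (topspaces).\<close>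
definition lifting_prop ::
  "'a topology \<Rightarrow> 'b topology \<Rightarrow> ('a \<Rightarrow> 'b) \<Rightarrow> 'c topology \<Rightarrow> 'd topology \<Rightarrow> ('c \<Rightarrow> 'd) \<Rightarrow> bool"
  where
  "lifting_prop A B f C D g \<longleftrightarrow>
     (\<forall>t b. continuous_map A C t \<and> continuous_map B D b \<and>
            (\<forall>x\<in>topspace A. g (t x) = b (f x)) \<longrightarrow>
        (\<exists>d. continuous_map B C d \<and>
             (\<forall>x\<in>topspace A. d (f x) = t x) \<and>
             (\<forall>y\<in>topspace B. g (d y) = b y)))"

text \<open>Sierpinski space on bool: o = True, c = False; open sets {}, {True}, UNIV.\<close>
definition sierpinski_space :: "bool topology" where
  "sierpinski_space = topology (\<lambda>U. U \<in> {{}, {True}, UNIV})"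

lemma openin_sierpinski_space:
  "openin sierpinski_space U \<longleftrightarrow> U \<in> {{}, {True}, UNIV}"
proof -
  have "istopology (\<lambda>U. U \<in> {{}, {True}, (UNIV::bool set)})"
    unfolding istopology_def by auto
  then show ?thesis
    unfolding sierpinski_space_def by (simp add: topology_inverse')
qed

definition point_space :: "unit topology" where
  "point_space = discrete_topology UNIV"

definition sigma_map :: "bool \<Rightarrow> unit" where
  "sigma_map x = ()"

end

theory Submission
  imports Defs
begin

text \<open>A continuous map t from the Sierpinski space into X is a pair of points a = t True,
  c = t False with c in the closure of {a}; a lift through the one-point space exists
  exactly when a = c. So the lifting property says that no point of a fibre lies in the
  closure of a different point of the same fibre. Since closures in a subspace are traces
  of closures, this is the T1 property of the fibres (closed singletons).\<close>

lemma topspace_sierpinski_space [simp]: "topspace sierpinski_space = UNIV"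
  unfolding topspace_def openin_sierpinski_space by auto

lemma continuous_map_sierpinski_space:
  "continuous_map sierpinski_space X t \<longleftrightarrow>
     t True \<in> topspace X \<and> t False \<in> X closure_of {t True}"
proof -
  have "{x. t x \<in> U} \<in> {{}, {True}, UNIV} \<longleftrightarrow> (t False \<in> U \<longrightarrow> t True \<in> U)" for U
    by (simp add: set_eq_iff all_bool_eq) blast
  then show ?thesis
    unfolding continuous_map_def openin_sierpinski_space in_closure_of
    by (auto simp: Pi_iff all_bool_eq)
qed

lemma lifting_prop_sigma_map_iff:
  assumes p: "p \<in> topspace X \<rightarrow> topspace Y"
  shows "lifting_prop sierpinski_space point_space sigma_map X Y p \<longleftrightarrow>
         (\<forall>a\<in>topspace X. \<forall>c\<in>X closure_of {a}. p c = p a \<longrightarrow> c = a)"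
proof
  assume lift: "lifting_prop sierpinski_space point_space sigma_map X Y p"
  show "\<forall>a\<in>topspace X. \<forall>c\<in>X closure_of {a}. p c = p a \<longrightarrow> c = a"
  proof (intro ballI impI)
    fix a c
    assume a: "a \<in> topspace X" and c: "c \<in> X closure_of {a}" and "p c = p a"
    define t where "t = (\<lambda>x. if x then a else c)"
    have "continuous_map sierpinski_space X t"
      using a c by (simp add: continuous_map_sierpinski_space t_def)
    moreover have "continuous_map point_space Y (\<lambda>_. p a)"
      using a p by (auto simp: point_space_def)
    moreover have "\<forall>x. p (t x) = p a"
      using \<open>p c = p a\<close> by (simp add: t_def)
    ultimately obtain d where "\<forall>x. d () = t x"
      using lift[unfolded lifting_prop_def, rule_format, of t "\<lambda>_. p a"]
      by (auto simp: sigma_map_def)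
    then have "d () = t False" "d () = t True"
      by blast+
    then show "c = a" by (simp add: t_def)
  qed
next
  assume trivial_specialization:
    "\<forall>a\<in>topspace X. \<forall>c\<in>X closure_of {a}. p c = p a \<longrightarrow> c = a"
  show "lifting_prop sierpinski_space point_space sigma_map X Y p"
    unfolding lifting_prop_def
  proof (intro allI impI)
    fix t b
    assume "continuous_map sierpinski_space X t \<and> continuous_map point_space Y b \<and>
            (\<forall>x\<in>topspace sierpinski_space. p (t x) = b (sigma_map x))"
    then have t: "t True \<in> topspace X" "t False \<in> X closure_of {t True}"
      and pt: "\<forall>x. p (t x) = b ()"
      by (auto simp: continuous_map_sierpinski_space sigma_map_def)
    then have "t False = t True"
      using trivial_specialization by metis
    then have "\<forall>x. t True = t x"
      by (simp add: all_bool_eq)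
    with t pt show "\<exists>d. continuous_map point_space X d \<and>
             (\<forall>x\<in>topspace sierpinski_space. d (sigma_map x) = t x) \<and>
             (\<forall>y\<in>topspace point_space. p (d y) = b y)"
      by (intro exI[of _ "\<lambda>_. t True"]) (simp add: point_space_def)
  qed
qed

lemma t1_space_subtopology_iff_closure_of:
  "t1_space (subtopology X S) \<longleftrightarrow>
   (\<forall>a\<in>topspace X \<inter> S. \<forall>c\<in>X closure_of {a}. c \<in> S \<longrightarrow> c = a)"
proof -
  have "subtopology X S closure_of {a} = S \<inter> X closure_of {a}" if "a \<in> S" for a
    using that by (simp add: closure_of_subtopology)
  moreover have "a \<in> X closure_of {a}" if "a \<in> topspace X" for a
    using that by (simp add: in_closure_of)
  ultimately show ?thesis
    unfolding t1_space_closedin_singleton closure_of_eq [symmetric]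
    by auto
qed

theorem mainTheorem5:
  fixes X :: "'a topology" and Y :: "'b topology" and p :: "'a \<Rightarrow> 'b"
  assumes "continuous_map X Y p"
  shows "lifting_prop sierpinski_space point_space sigma_map X Y p \<longleftrightarrow>
         (\<forall>y\<in>topspace Y. t1_space (subtopology X {x \<in> topspace X. p x = y}))"
proof -
  have p: "p \<in> topspace X \<rightarrow> topspace Y"
    using assms by (rule continuous_map_funspace)
  have "(\<forall>y\<in>topspace Y. t1_space (subtopology X {x \<in> topspace X. p x = y})) \<longleftrightarrow>
        (\<forall>a\<in>topspace X. \<forall>c\<in>X closure_of {a}. p c = p a \<longrightarrow> c = a)"
    using p closure_of_subset_topspace
    by (fastforce simp: t1_space_subtopology_iff_closure_of)
  with p show ?thesis
    by (simp add: lifting_prop_sigma_map_iff)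
qed

end
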